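(* Every induced subcomplex of a unimodular simplicial complex is unimodular.
   Context: A simplicial complex on a finite ground set $V$ is a family of subsets of $V$ closed under subsets; facets are inclusion-maximal faces. For $W\subseteq V$ the induced subcomplex is $\{F\in\mathcal{C}:F\subseteq W\}$ on ground set $W$. $\mathcal{A}_{\mathcal{C}}$ is the $0/1$ matrix with columns indexed by $\mathbf{i}\in\{1,2\}^V$ and rows indexed by pairs $(F,\mathbf{e})$, $F$ a facet, $\mathbf{e}\in\{1,2\}^F$; entry $1$ iff $\mathbf{e}=\mathbf{i}|_F$. An integer matrix is unimodular if every circuit (nonzero integer kernel vector with coprime entries and inclusion-minimal support) has entries in $\{0,\pm1\}$; $\mathcal{C}$ is unimodular if $\mathcal{A}_{\mathcal{C}}$ is. *)

theory Defs
  imports Main "HOL-Library.FuncSet"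
begin

definition kernel_vec :: "'r set \<Rightarrow> 'c set \<Rightarrow> ('r \<Rightarrow> 'c \<Rightarrow> int) \<Rightarrow> ('c \<Rightarrow> int) \<Rightarrow> bool" where
  "kernel_vec R C A u \<longleftrightarrow> (\<forall>j. j \<notin> C \<longrightarrow> u j = 0) \<and> (\<forall>r\<in>R. (\<Sum>j\<in>C. A r j * u j) = 0)"

definition supp_vec :: "'c set \<Rightarrow> ('c \<Rightarrow> int) \<Rightarrow> 'c set" where
  "supp_vec C u = {j\<in>C. u j \<noteq> 0}"

definition circuit :: "'r set \<Rightarrow> 'c set \<Rightarrow> ('r \<Rightarrow> 'c \<Rightarrow> int) \<Rightarrow> ('c \<Rightarrow> int) \<Rightarrow> bool" where
  "circuit R C A u \<longleftrightarrow>
     kernel_vec R C A u \<and> supp_vec C u \<noteq> {} \<and> Gcd (u ` C) = 1 \<and>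
     (\<forall>w. kernel_vec R C A w \<and> supp_vec C w \<noteq> {} \<and> supp_vec C w \<subseteq> supp_vec C u
          \<longrightarrow> supp_vec C w = supp_vec C u)"

definition unimodular_mat :: "'r set \<Rightarrow> 'c set \<Rightarrow> ('r \<Rightarrow> 'c \<Rightarrow> int) \<Rightarrow> bool" where
  "unimodular_mat R C A \<longleftrightarrow> (\<forall>u. circuit R C A u \<longrightarrow> (\<forall>j\<in>C. u j \<in> {-1, 0, 1}))"

definition simplicial_complex :: "'a set \<Rightarrow> 'a set set \<Rightarrow> bool" where
  "simplicial_complex V K \<longleftrightarrow> finite V \<and> K \<subseteq> Pow V \<and> (\<forall>F\<in>K. \<forall>G. G \<subseteq> F \<longrightarrow> G \<in> K)"

definition facets :: "'a set set \<Rightarrow> 'a set set" where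
  "facets K = {F\<in>K. \<forall>G\<in>K. F \<subseteq> G \<longrightarrow> G = F}"

definition induced_subcomplex :: "'a set set \<Rightarrow> 'a set \<Rightarrow> 'a set set" where
  "induced_subcomplex K W = {F\<in>K. F \<subseteq> W}"

definition cols_A :: "'a set \<Rightarrow> ('a \<Rightarrow> nat) set" where
  "cols_A V = PiE V (\<lambda>_. {1, 2})"

definition rows_A :: "'a set set \<Rightarrow> ('a set \<times> ('a \<Rightarrow> nat)) set" where
  "rows_A K = (SIGMA F:facets K. PiE F (\<lambda>_. {1, 2}))"

definition entry_A :: "'a set \<times> ('a \<Rightarrow> nat) \<Rightarrow> ('a \<Rightarrow> nat) \<Rightarrow> int" where
  "entry_A r i = (if snd r = restrict i (fst r) then 1 else 0)"

definition unimodular_complex :: "'a set \<Rightarrow> 'a set set \<Rightarrow> bool" where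
  "unimodular_complex V K \<longleftrightarrow> unimodular_mat (rows_A K) (cols_A V) entry_A"

end

theory Submission
  imports Defs
begin

text \<open>Pad every column \<open>i \<in> {1,2}\<^sup>W\<close> by the value 1 on \<open>V - W\<close>. This
injective column map identifies the kernel of the matrix of \<open>K|W\<close> with the kernel
vectors of the matrix of \<open>K\<close> supported on padded columns. Indeed, a vector is in
the kernel iff its marginals on all faces (not only facets) vanish, because a face
marginal is a sum of marginals of any facet containing it; and the \<open>G\<close>-marginal of
a padded vector is the \<open>(G \<inter> W)\<close>-marginal of the original vector, or zero. An
injective column map identifying kernels carries circuits to circuits, so every
circuit of the smaller matrix has entries in \<open>{0, \<plusminus>1}\<close>.\<close>

definition push_vec :: "('c \<Rightarrow> 'd) \<Rightarrow> 'c set \<Rightarrow> ('c \<Rightarrow> int) \<Rightarrow> 'd \<Rightarrow> int" where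
  "push_vec \<phi> C u i = (if i \<in> \<phi> ` C then u (inv_into C \<phi> i) else 0)"

lemma push_vec_image:
  assumes "inj_on \<phi> C" "j \<in> C"
  shows "push_vec \<phi> C u (\<phi> j) = u j"
  using assms by (simp add: push_vec_def)

lemma supp_vec_push_vec:
  assumes "inj_on \<phi> C" "\<phi> ` C \<subseteq> C'"
  shows "supp_vec C' (push_vec \<phi> C u) = \<phi> ` supp_vec C u"
  using assms by (auto simp: supp_vec_def push_vec_def inj_on_eq_iff)

lemma sum_push_vec:
  assumes "inj_on \<phi> C" "finite S"
  shows "sum (push_vec \<phi> C u) S = sum u {j\<in>C. \<phi> j \<in> S}"
proof -
  have "sum (push_vec \<phi> C u) S = sum (push_vec \<phi> C u) (\<phi> ` {j\<in>C. \<phi> j \<in> S})"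
    using assms(2) by (intro sum.mono_neutral_right) (auto simp: push_vec_def)
  also have "\<dots> = sum u {j\<in>C. \<phi> j \<in> S}"
    using assms(1) by (subst sum.reindex) (auto intro: inj_on_subset simp: push_vec_image)
  finally show ?thesis .
qed

lemma push_vec_pullback:
  assumes "inj_on \<phi> C" "\<And>i. i \<notin> \<phi> ` C \<Longrightarrow> w i = 0"
  shows "push_vec \<phi> C (\<lambda>j. if j \<in> C then w (\<phi> j) else 0) = w"
  using assms by (auto simp: push_vec_def fun_eq_iff)

locale kernel_embedding =
  fixes R :: "'r set" and C :: "'c set" and A :: "'r \<Rightarrow> 'c \<Rightarrow> int"
    and R' :: "'s set" and C' :: "'d set" and A' :: "'s \<Rightarrow> 'd \<Rightarrow> int"
    and \<phi> :: "'c \<Rightarrow> 'd"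
  assumes inj: "inj_on \<phi> C" and maps_to: "\<phi> ` C \<subseteq> C'"
    and kernel_vec_iff:
      "\<And>u. (\<And>j. j \<notin> C \<Longrightarrow> u j = 0) \<Longrightarrow>
        kernel_vec R C A u \<longleftrightarrow> kernel_vec R' C' A' (push_vec \<phi> C u)"
begin

lemma kernel_vec_pullback:
  assumes "kernel_vec R' C' A' w'" "\<And>i. i \<notin> \<phi> ` C \<Longrightarrow> w' i = 0"
  obtains w where "kernel_vec R C A w" "push_vec \<phi> C w = w'"
proof
  let ?w = "\<lambda>j. if j \<in> C then w' (\<phi> j) else 0"
  show push_w: "push_vec \<phi> C ?w = w'"
    using push_vec_pullback[OF inj] assms(2) .
  have "kernel_vec R C A ?w \<longleftrightarrow> kernel_vec R' C' A' (push_vec \<phi> C ?w)"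
    by (rule kernel_vec_iff) simp
  then show "kernel_vec R C A ?w"
    using assms(1) by (simp add: push_w)
qed

lemma circuit_push_vec:
  assumes u: "circuit R C A u"
  shows "circuit R' C' A' (push_vec \<phi> C u)"
proof -
  have ker: "kernel_vec R C A u" and ne: "supp_vec C u \<noteq> {}" and gcd: "Gcd (u ` C) = 1"
    and minimal: "\<And>w. kernel_vec R C A w \<Longrightarrow> supp_vec C w \<noteq> {} \<Longrightarrow>
      supp_vec C w \<subseteq> supp_vec C u \<Longrightarrow> supp_vec C w = supp_vec C u"
    using u unfolding circuit_def by auto
  have "kernel_vec R C A u \<longleftrightarrow> kernel_vec R' C' A' (push_vec \<phi> C u)"
    by (rule kernel_vec_iff) (use ker in \<open>auto simp: kernel_vec_def\<close>)
  then have ker': "kernel_vec R' C' A' (push_vec \<phi> C u)"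
    using ker by blast
  have supp: "supp_vec C' (push_vec \<phi> C u) = \<phi> ` supp_vec C u"
    using supp_vec_push_vec[OF inj maps_to] .
  have "u ` C \<subseteq> push_vec \<phi> C u ` C'"
    using maps_to push_vec_image[OF inj] by (metis image_eqI image_subset_iff)
  then have "Gcd (push_vec \<phi> C u ` C') dvd Gcd (u ` C)"
    by (intro Gcd_greatest Gcd_dvd) blast
  then have gcd': "Gcd (push_vec \<phi> C u ` C') = 1"
    using gcd by simp
  have minimal': "supp_vec C' w' = supp_vec C' (push_vec \<phi> C u)"
    if w': "kernel_vec R' C' A' w'" "supp_vec C' w' \<noteq> {}"
      "supp_vec C' w' \<subseteq> supp_vec C' (push_vec \<phi> C u)" for w'
  proof -
    have "w' i = 0" if "i \<notin> \<phi> ` C" for i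
      using w' that supp unfolding kernel_vec_def supp_vec_def by blast
    then obtain w where w: "kernel_vec R C A w" and push_w: "push_vec \<phi> C w = w'"
      using kernel_vec_pullback w'(1) by blast
    have supp_w: "supp_vec C' w' = \<phi> ` supp_vec C w"
      using supp_vec_push_vec[OF inj maps_to, of w] by (simp add: push_w)
    have "supp_vec C w \<subseteq> supp_vec C u"
    proof
      fix j assume j: "j \<in> supp_vec C w"
      then have "\<phi> j \<in> \<phi> ` supp_vec C u"
        using w'(3) unfolding supp supp_w by blast
      moreover have "j \<in> C" "supp_vec C u \<subseteq> C"
        using j unfolding supp_vec_def by auto
      ultimately show "j \<in> supp_vec C u"
        using inj_on_image_mem_iff[OF inj] by blast
    qed
    then have "supp_vec C w = supp_vec C u"
      using minimal w w'(2) supp_w by blast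
    then show ?thesis
      using supp supp_w by simp
  qed
  show ?thesis
    unfolding circuit_def using ker' ne supp gcd' minimal' by blast
qed

lemma unimodular_mat_pullback:
  assumes "unimodular_mat R' C' A'"
  shows "unimodular_mat R C A"
  unfolding unimodular_mat_def
proof (intro allI impI ballI)
  fix u j assume "circuit R C A u" "j \<in> C"
  then show "u j \<in> {-1, 0, 1}"
    using assms circuit_push_vec maps_to push_vec_image[OF inj]
    unfolding unimodular_mat_def by (metis image_subset_iff)
qed

end

definition marginal :: "('a \<Rightarrow> 'b) set \<Rightarrow> (('a \<Rightarrow> 'b) \<Rightarrow> int) \<Rightarrow> 'a set \<Rightarrow> ('a \<Rightarrow> 'b) \<Rightarrow> int" where
  "marginal C u G e = sum u {i\<in>C. restrict i G = e}"

lemma marginal_eq_sum_finer: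
  assumes "finite C" "G \<subseteq> F"
  shows "marginal C u G e =
    (\<Sum>y\<in>{y\<in>(\<lambda>i. restrict i F) ` C. restrict y G = e}. marginal C u F y)"
proof -
  have restrict_F_G: "restrict (restrict i F) G = restrict i G" for i :: "'a \<Rightarrow> 'b"
    using assms(2) by (simp add: Int_absorb1)
  let ?S = "{i\<in>C. restrict i G = e}"
  have "marginal C u G e = (\<Sum>y\<in>(\<lambda>i. restrict i F) ` ?S. sum u {i\<in>?S. restrict i F = y})"
    unfolding marginal_def using assms(1) by (intro sum.image_gen) auto
  also have "(\<lambda>i. restrict i F) ` ?S = {y\<in>(\<lambda>i. restrict i F) ` C. restrict y G = e}"
    using restrict_F_G by auto
  also have "(\<Sum>y\<in>\<dots>. sum u {i\<in>?S. restrict i F = y}) = (\<Sum>y\<in>\<dots>. marginal C u F y)"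
  proof (intro sum.cong refl)
    fix y assume "y \<in> {y\<in>(\<lambda>i. restrict i F) ` C. restrict y G = e}"
    then have "{i\<in>?S. restrict i F = y} = {i\<in>C. restrict i F = y}"
      using restrict_F_G by (metis (mono_tags, lifting) mem_Collect_eq)
    then show "sum u {i\<in>?S. restrict i F = y} = marginal C u F y"
      unfolding marginal_def by simp
  qed
  finally show ?thesis .
qed

lemma finite_cols_A: "finite V \<Longrightarrow> finite (cols_A V)"
  unfolding cols_A_def by (intro finite_PiE) auto

lemma restrict_cols_A: "F \<subseteq> V \<Longrightarrow> i \<in> cols_A V \<Longrightarrow> restrict i F \<in> PiE F (\<lambda>_. {1, 2})"
  unfolding cols_A_def by auto

lemma kernel_vec_rows_A_iff:
  assumes "finite C"
  shows "kernel_vec (rows_A K) C entry_A u \<longleftrightarrow> (\<forall>j. j \<notin> C \<longrightarrow> u j = 0) \<and>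
    (\<forall>F\<in>facets K. \<forall>e\<in>PiE F (\<lambda>_. {1, 2}). marginal C u F e = 0)"
proof -
  have "(\<Sum>i\<in>C. entry_A (F, e) i * u i) = marginal C u F e" for F e
    unfolding marginal_def entry_A_def using assms by (auto simp: sum.inter_filter intro: sum.cong)
  then show ?thesis
    unfolding kernel_vec_def rows_A_def by auto
qed

lemma facet_above:
  assumes "simplicial_complex V K" "G \<in> K"
  obtains F where "F \<in> facets K" "G \<subseteq> F"
proof -
  have "finite K"
    using assms(1) unfolding simplicial_complex_def by (meson finite_Pow_iff finite_subset)
  then obtain F where F: "F \<in> {F\<in>K. G \<subseteq> F}"
    and maximal: "\<forall>H\<in>{F\<in>K. G \<subseteq> F}. F \<subseteq> H \<longrightarrow> F = H"
    using finite_has_maximal2[of "{F\<in>K. G \<subseteq> F}" G] assms(2) by auto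
  then have "F \<in> facets K"
    unfolding facets_def by auto
  then show ?thesis
    using that F by blast
qed

lemma kernel_vec_rows_A_iff_faces:
  assumes sc: "simplicial_complex V K"
  shows "kernel_vec (rows_A K) (cols_A V) entry_A u \<longleftrightarrow> (\<forall>j. j \<notin> cols_A V \<longrightarrow> u j = 0) \<and>
    (\<forall>G\<in>K. \<forall>e\<in>PiE G (\<lambda>_. {1, 2}). marginal (cols_A V) u G e = 0)"
proof -
  have fin: "finite (cols_A V)" and KV: "K \<subseteq> Pow V"
    using sc finite_cols_A unfolding simplicial_complex_def by auto
  have "marginal (cols_A V) u G e = 0"
    if facet_zero: "\<forall>F\<in>facets K. \<forall>e\<in>PiE F (\<lambda>_. {1, 2}). marginal (cols_A V) u F e = 0"
      and "G \<in> K" for G e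
  proof -
    obtain F where F: "F \<in> facets K" "G \<subseteq> F"
      using facet_above[OF sc \<open>G \<in> K\<close>] .
    then have "F \<subseteq> V"
      using KV unfolding facets_def by auto
    then have "\<forall>y\<in>(\<lambda>i. restrict i F) ` cols_A V. marginal (cols_A V) u F y = 0"
      using F(1) facet_zero restrict_cols_A[OF \<open>F \<subseteq> V\<close>] by blast
    then show ?thesis
      by (subst marginal_eq_sum_finer[OF fin \<open>G \<subseteq> F\<close>]) (auto intro: sum.neutral)
  qed
  moreover have "facets K \<subseteq> K"
    unfolding facets_def by auto
  ultimately show ?thesis
    unfolding kernel_vec_rows_A_iff[OF fin] by blast
qed

lemma simplicial_complex_induced_subcomplex:
  "simplicial_complex V K \<Longrightarrow> W \<subseteq> V \<Longrightarrow> simplicial_complex W (induced_subcomplex K W)"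
  unfolding simplicial_complex_def induced_subcomplex_def by (auto intro: finite_subset)

definition extend_by_one :: "'a set \<Rightarrow> 'a set \<Rightarrow> ('a \<Rightarrow> nat) \<Rightarrow> 'a \<Rightarrow> nat" where
  "extend_by_one V W j = (\<lambda>v. if v \<in> V - W then 1 else j v)"

lemma extend_by_one_cols_A: "W \<subseteq> V \<Longrightarrow> j \<in> cols_A W \<Longrightarrow> extend_by_one V W j \<in> cols_A V"
  unfolding extend_by_one_def cols_A_def by (auto simp: PiE_def extensional_def Pi_def)

lemma restrict_extend_by_one: "j \<in> cols_A W \<Longrightarrow> restrict (extend_by_one V W j) W = j"
  unfolding extend_by_one_def cols_A_def by (auto simp: fun_eq_iff PiE_def extensional_def)

lemma inj_on_extend_by_one: "inj_on (extend_by_one V W) (cols_A W)"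
  by (rule inj_on_inverseI[where g = "\<lambda>i. restrict i W"]) (rule restrict_extend_by_one)

lemma marginal_push_extend_by_one:
  assumes "finite V" "W \<subseteq> V" "G \<subseteq> V" and e: "e \<in> PiE G (\<lambda>_. {1, 2})"
  shows "marginal (cols_A V) (push_vec (extend_by_one V W) (cols_A W) u) G e =
    (if \<forall>v\<in>G - W. e v = 1 then marginal (cols_A W) u (G \<inter> W) (restrict e (G \<inter> W)) else 0)"
proof -
  have match: "restrict (extend_by_one V W j) G = e \<longleftrightarrow>
      (\<forall>v\<in>G - W. e v = 1) \<and> restrict j (G \<inter> W) = restrict e (G \<inter> W)" for j
    using e assms(3) unfolding extend_by_one_def by (auto simp: fun_eq_iff PiE_def extensional_def)
  have "marginal (cols_A V) (push_vec (extend_by_one V W) (cols_A W) u) G e =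
      sum u {j\<in>cols_A W. extend_by_one V W j \<in> {i\<in>cols_A V. restrict i G = e}}"
    unfolding marginal_def using assms(1) by (simp add: sum_push_vec[OF inj_on_extend_by_one] finite_cols_A)
  also have "{j\<in>cols_A W. extend_by_one V W j \<in> {i\<in>cols_A V. restrict i G = e}} =
      {j\<in>cols_A W. restrict (extend_by_one V W j) G = e}"
    using extend_by_one_cols_A[OF assms(2)] by blast
  also have "sum u \<dots> =
    (if \<forall>v\<in>G - W. e v = 1 then marginal (cols_A W) u (G \<inter> W) (restrict e (G \<inter> W)) else 0)"
  proof (cases "\<forall>v\<in>G - W. e v = 1")
    case True
    then show ?thesis
      unfolding match marginal_def by simp
  next
    case False
    then have "{j\<in>cols_A W. restrict (extend_by_one V W j) G = e} = {}"
      unfolding match by blast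
    then show ?thesis
      unfolding if_not_P[OF False] by (simp only: sum.empty)
  qed
  finally show ?thesis .
qed

lemma kernel_vec_induced_subcomplex_iff:
  assumes sc: "simplicial_complex V K" and WV: "W \<subseteq> V"
    and u_off: "\<And>j. j \<notin> cols_A W \<Longrightarrow> u j = 0"
  shows "kernel_vec (rows_A (induced_subcomplex K W)) (cols_A W) entry_A u \<longleftrightarrow>
    kernel_vec (rows_A K) (cols_A V) entry_A (push_vec (extend_by_one V W) (cols_A W) u)"
proof -
  have fin: "finite V" and KV: "K \<subseteq> Pow V" and closed: "\<forall>F\<in>K. \<forall>G. G \<subseteq> F \<longrightarrow> G \<in> K"
    using sc unfolding simplicial_complex_def by auto
  have push_off: "push_vec (extend_by_one V W) (cols_A W) u i = 0" if "i \<notin> cols_A V" for i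
    using that WV extend_by_one_cols_A unfolding push_vec_def by auto
  have "(\<forall>G\<in>induced_subcomplex K W. \<forall>e\<in>PiE G (\<lambda>_. {1, 2}). marginal (cols_A W) u G e = 0) \<longleftrightarrow>
      (\<forall>G\<in>K. \<forall>e\<in>PiE G (\<lambda>_. {1, 2}).
         marginal (cols_A V) (push_vec (extend_by_one V W) (cols_A W) u) G e = 0)"
  proof (intro iffI ballI)
    fix G and e :: "'a \<Rightarrow> nat"
    assume induced_zero: "\<forall>G\<in>induced_subcomplex K W. \<forall>e\<in>PiE G (\<lambda>_. {1, 2}).
        marginal (cols_A W) u G e = 0"
      and "G \<in> K" "e \<in> PiE G (\<lambda>_. {1, 2})"
    moreover have "G \<inter> W \<in> induced_subcomplex K W"
      using \<open>G \<in> K\<close> closed unfolding induced_subcomplex_def by auto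
    moreover have "G \<subseteq> V"
      using \<open>G \<in> K\<close> KV by auto
    moreover have "restrict e (G \<inter> W) \<in> PiE (G \<inter> W) (\<lambda>_. {1, 2})"
      using \<open>e \<in> PiE G (\<lambda>_. {1, 2})\<close> by auto
    ultimately show "marginal (cols_A V) (push_vec (extend_by_one V W) (cols_A W) u) G e = 0"
      using fin WV by (simp add: marginal_push_extend_by_one)
  next
    fix G and e :: "'a \<Rightarrow> nat"
    assume padded_zero: "\<forall>G\<in>K. \<forall>e\<in>PiE G (\<lambda>_. {1, 2}).
        marginal (cols_A V) (push_vec (extend_by_one V W) (cols_A W) u) G e = 0"
      and G: "G \<in> induced_subcomplex K W" and e: "e \<in> PiE G (\<lambda>_. {1, 2})"
    have "G \<in> K" "G \<subseteq> W"
      using G unfolding induced_subcomplex_def by auto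
    moreover have "\<forall>v\<in>G - W. e v = 1"
      using \<open>G \<subseteq> W\<close> by blast
    ultimately have "marginal (cols_A V) (push_vec (extend_by_one V W) (cols_A W) u) G e =
        marginal (cols_A W) u G e"
      using e fin WV by (simp add: marginal_push_extend_by_one Int_absorb2 restrict_PiE_iff)
    then show "marginal (cols_A W) u G e = 0"
      using padded_zero \<open>G \<in> K\<close> e by simp
  qed
  then show ?thesis
    unfolding kernel_vec_rows_A_iff_faces[OF sc]
      kernel_vec_rows_A_iff_faces[OF simplicial_complex_induced_subcomplex[OF sc WV]]
    using u_off push_off by blast
qed

theorem proposition3p1:
  fixes V W :: "'a set" and K :: "'a set set"
  assumes "simplicial_complex V K"
    and "unimodular_complex V K"
    and "W \<subseteq> V"
  shows "unimodular_complex W (induced_subcomplex K W)"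
proof -
  interpret kernel_embedding "rows_A (induced_subcomplex K W)" "cols_A W" entry_A
      "rows_A K" "cols_A V" entry_A "extend_by_one V W"
    using inj_on_extend_by_one extend_by_one_cols_A[OF assms(3)]
      kernel_vec_induced_subcomplex_iff[OF assms(1,3)]
    by unfold_locales blast+
  show ?thesis
    using unimodular_mat_pullback assms(2) unfolding unimodular_complex_def .
qed

end
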